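(* Let $(I_t)_{t\in\mathbb{Z}}$ be a stochastic process such that there exists a family $(I_t^n)_{t\in\mathbb{Z}}$, $n\in\mathbb{N}$, of $\{0,1\}$-valued stationary stochastic processes with $P(I_0^n=1)>0$ for all $n$ and $$\mathcal{L}\bigl((I_t^n)_{t\in\{-u,\dots,v\}}\mid I_0^n=1\bigr)\Longrightarrow \mathcal{L}\bigl((I_t)_{t\in\{-u,\dots,v\}}\bigr)\quad (n\to\infty)$$ for all $u,v\in\mathbb{N}$. Define $S_+^i=\sum_{t=1}^\infty I_t\in\mathbb{N}_0\cup\{\infty\}$ and $S_-^i=\sum_{t=1}^\infty I_{-t}\in\mathbb{N}_0\cup\{\infty\}$. Then $$P(S_+^i\ge k,\ S_-^i\ge \ell)=P(S_+^i\ge k+\ell)=P(S_-^i\ge k+\ell),\qquad k,\ell\in\mathbb{N}_0.$$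
   Context: $\mathbb{N}_0=\{0,1,2,\dots\}$. $\mathcal{L}(\cdot\mid\cdot)$ denotes conditional law and $\Longrightarrow$ convergence in distribution. *)

theory Defs
  imports "HOL-Probability.Probability"
begin

text \<open>Finite-dimensional window (X_t) for t in {-u,...,v}, encoded as a function
  int => real that vanishes outside the window.\<close>
definition fdd_vec :: "(int \<Rightarrow> 'a \<Rightarrow> real) \<Rightarrow> nat \<Rightarrow> nat \<Rightarrow> 'a \<Rightarrow> (int \<Rightarrow> real)" where
  "fdd_vec X u v \<omega> = (\<lambda>t. if - int u \<le> t \<and> t \<le> int v then X t \<omega> else 0)"

definition stationary_process :: "'a measure \<Rightarrow> (int \<Rightarrow> 'a \<Rightarrow> real) \<Rightarrow> bool" where
  "stationary_process M X \<longleftrightarrow>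
     (\<forall>s::int. distr M (Pi\<^sub>M UNIV (\<lambda>_. borel)) (\<lambda>\<omega> t. X (t + s) \<omega>)
             = distr M (Pi\<^sub>M UNIV (\<lambda>_. borel)) (\<lambda>\<omega> t. X t \<omega>))"

text \<open>Weak convergence, for every window {-u..v}, of the conditional law of the
  window of X_n given X_n(0) = 1 to the law of the window of X (tested against all
  bounded continuous functions).\<close>
definition cond_fdd_conv ::
  "(nat \<Rightarrow> 'b measure) \<Rightarrow> (nat \<Rightarrow> int \<Rightarrow> 'b \<Rightarrow> real) \<Rightarrow> 'a measure \<Rightarrow> (int \<Rightarrow> 'a \<Rightarrow> real) \<Rightarrow> bool" where
  "cond_fdd_conv Mn Xn M X \<longleftrightarrow>
     (\<forall>u v. \<forall>f :: (int \<Rightarrow> real) \<Rightarrow> real. continuous_on UNIV f \<and> bounded (range f) \<longrightarrow>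
        (\<lambda>n. (\<integral>\<omega>. indicator {\<omega> \<in> space (Mn n). Xn n 0 \<omega> = 1} \<omega> * f (fdd_vec (Xn n) u v \<omega>) \<partial>Mn n)
              / measure (Mn n) {\<omega> \<in> space (Mn n). Xn n 0 \<omega> = 1})
        \<longlonglongrightarrow> (\<integral>\<omega>. f (fdd_vec X u v \<omega>) \<partial>M))"

definition S_plus :: "(int \<Rightarrow> 'a \<Rightarrow> real) \<Rightarrow> 'a \<Rightarrow> ennreal" where
  "S_plus X \<omega> = (\<Sum>t. ennreal (X (int t + 1) \<omega>))"

definition S_minus :: "(int \<Rightarrow> 'a \<Rightarrow> real) \<Rightarrow> 'a \<Rightarrow> ennreal" where
  "S_minus X \<omega> = (\<Sum>t. ennreal (X (- int t - 1) \<omega>))"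

end

theory Submission
  imports Defs
begin

(* For a stationary 0-1 process conditioned on a one at the origin, moving the origin to the
   l-th one before it (or after it) is measure preserving, and distinct shifts land in disjoint
   events. Hence "at least k ones in (0, m] and l ones in [-m, 0)" is at most as likely as
   "at least k + l ones in (0, 2m]" and at least as likely as "at least k + l ones in (0, m]".
   Since the conditional windows converge weakly to those of I, which is therefore a.s. 0-1
   valued too, both inequalities hold for I, and letting m grow gives
   P(S+ >= k, S- >= l) = P(S+ >= k + l); the case k = 0 gives the identity for S-. *)

lemma LIMSEQ_unique_interleaved:
  fixes a b :: "nat \<Rightarrow> real"
  assumes "a \<longlonglongrightarrow> A" "b \<longlonglongrightarrow> B" "strict_mono r" "\<And>m. a m \<le> b (r m)" "\<And>m. b m \<le> a m"
  shows "A = B"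
proof (rule antisym)
  have "(b \<circ> r) \<longlonglongrightarrow> B"
    using assms(2,3) by (rule LIMSEQ_subseq_LIMSEQ)
  with assms(1,4) show "A \<le> B"
    by (intro LIMSEQ_le) auto
  from assms(2,1,5) show "B \<le> A"
    by (intro LIMSEQ_le) auto
qed

section \<open>Counting the ones of a 0-1 path\<close>

lemma sum_in_Nats: "(\<And>t. t \<in> A \<Longrightarrow> f t \<in> \<nat>) \<Longrightarrow> sum f A \<in> \<nat>"
  by (induction A rule: infinite_finite_induct) auto

lemma Nats_less_imp_le_diff_one: "s \<in> \<nat> \<Longrightarrow> s < real k \<Longrightarrow> s \<le> real k - 1"
  by (elim Nats_cases) (simp add: of_nat_diff)

lemma binary_sum_in_Nats: "(\<And>t. x t \<in> {0, 1}) \<Longrightarrow> sum x A \<in> (\<nat> :: real set)"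
  by (rule sum_in_Nats) (metis Nats_0 Nats_1 insert_iff singletonD)

lemma sum_int_interval_split:
  "a \<le> b + 1 \<Longrightarrow> b \<le> d \<Longrightarrow> sum f {a..d} = sum f {a..b} + sum f {b + 1..(d::int)}"
  by (subst sum.union_disjoint[symmetric]) (auto intro!: sum.cong)

lemma sum_int_interval_shift: "sum (\<lambda>t. f (t + s)) {a..b} = sum f {a + s..b + (s::int)}"
  by (subst sum.reindex[of "\<lambda>t. t + s", unfolded o_def, symmetric]) (auto simp: inj_on_def)

lemma sum_int_interval_reflect: "sum (\<lambda>t. f (- t)) {a..b} = sum f {- b..- (a::int)}"
  by (subst sum.reindex[of uminus, unfolded o_def, symmetric]) (auto simp: inj_on_def)

lemma sum_add_le_superset:
  fixes f :: "'a \<Rightarrow> 'b::ordered_comm_monoid_add"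
  assumes "finite B" "A \<subseteq> B" "t \<in> B - A" "\<And>b. b \<in> B \<Longrightarrow> 0 \<le> f b"
  shows "sum f A + f t \<le> sum f B"
proof -
  have "sum f A + f t = sum f (insert t A)"
    using assms by (simp add: finite_subset add.commute)
  also have "\<dots> \<le> sum f B"
    using assms by (intro sum_mono2) auto
  finally show ?thesis .
qed

definition lth_one_after :: "nat \<Rightarrow> int \<Rightarrow> int \<Rightarrow> (int \<Rightarrow> real) \<Rightarrow> bool" where
  "lth_one_after l a b x \<longleftrightarrow> a < b \<and> x b = 1 \<and> sum x {a + 1..b} = real l"

lemma lth_one_after_shift:
  "lth_one_after l a b (\<lambda>t. x (t + s)) \<longleftrightarrow> lth_one_after l (a + s) (b + s) x"
  by (simp add: lth_one_after_def sum_int_interval_shift ac_simps)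

lemma lth_one_after_unique:
  assumes x: "\<And>t. 0 \<le> x t" and "lth_one_after l a b x" "lth_one_after l a b' x"
  shows "b = b'"
proof (rule ccontr)
  assume "b \<noteq> b'"
  then obtain c c' where cc': "{c, c'} = {b, b'}" "c < c'" by (metis insert_commute neqE)
  with assms have "lth_one_after l a c x" "lth_one_after l a c' x"
    by (auto simp: doubleton_eq_iff)
  moreover from this cc' x have "sum x {a + 1..c} + x c' \<le> sum x {a + 1..c'}"
    by (intro sum_add_le_superset) (auto simp: lth_one_after_def)
  ultimately show False by (simp add: lth_one_after_def)
qed

lemma lth_one_after_unique_start:
  assumes x: "\<And>t. 0 \<le> x t" and "x a = 1" "x a' = 1" "lth_one_after l a b x" "lth_one_after l a' b x"
  shows "a = a'"
proof (rule ccontr)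
  assume "a \<noteq> a'"
  then obtain c c' where cc': "{c, c'} = {a, a'}" "c < c'" by (metis insert_commute neqE)
  with assms have "x c' = 1" "lth_one_after l c b x" "lth_one_after l c' b x"
    by (auto simp: doubleton_eq_iff)
  moreover from this cc' x have "sum x {c' + 1..b} + x c' \<le> sum x {c + 1..b}"
    by (intro sum_add_le_superset) (auto simp: lth_one_after_def)
  ultimately show False by (simp add: lth_one_after_def)
qed

lemma binary_lth_one_after_exists:
  fixes x :: "int \<Rightarrow> real"
  assumes x: "\<And>t. x t \<in> {0, 1}" and "1 \<le> l"
  shows "real l \<le> sum x {1..int m} \<Longrightarrow> \<exists>j\<in>{1..int m}. lth_one_after l 0 j x"
proof (induction m)
  case 0
  with \<open>1 \<le> l\<close> show ?case by simp
next
  case (Suc m)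
  show ?case
  proof (cases "real l \<le> sum x {1..int m}")
    case True
    with Suc.IH show ?thesis by force
  next
    case False
    have step: "sum x {1..int (Suc m)} = sum x {1..int m} + x (int (Suc m))"
      using sum_int_interval_split[of 1 "int m" "int (Suc m)" x] by (simp add: add.commute)
    have "sum x {1..int m} \<in> \<nat>"
      using x by (rule binary_sum_in_Nats)
    with False have "sum x {1..int m} \<le> real l - 1"
      by (simp add: Nats_less_imp_le_diff_one)
    with Suc.prems False step x[of "int (Suc m)"]
    have "x (int (Suc m)) = 1" "sum x {1..int (Suc m)} = real l" by auto
    then show ?thesis by (intro bexI[of _ "int (Suc m)"]) (auto simp: lth_one_after_def)
  qed
qed

lemma binary_lth_one_before_exists:
  fixes x :: "int \<Rightarrow> real"
  assumes x: "\<And>t. x t \<in> {0, 1}" and "x 0 = 1" "1 \<le> l" "real l \<le> sum x {- int m..-1}"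
  shows "\<exists>j\<in>{1..int m}. x (- j) = 1 \<and> lth_one_after l (- j) 0 x"
proof -
  have "real l \<le> sum (\<lambda>t. x (- t)) {1..int m}"
    using assms(4) by (simp add: sum_int_interval_reflect)
  then obtain j where j: "j \<in> {1..int m}" "lth_one_after l 0 j (\<lambda>t. x (- t))"
    using binary_lth_one_after_exists[of "\<lambda>t. x (- t)"] x \<open>1 \<le> l\<close> by blast
  then have "sum x {- j..-1} = real l" "x (- j) = 1"
    by (simp_all add: lth_one_after_def sum_int_interval_reflect)
  moreover have "sum x {- j..0} = sum x {- j..-1} + x 0" "sum x {- j..0} = x (- j) + sum x {1 - j..0}"
    using j sum_int_interval_split[of "- j" "-1" 0 x] sum_int_interval_split[of "- j" "- j" 0 x]
    by auto
  ultimately show ?thesis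
    using j \<open>x 0 = 1\<close> by (intro bexI[of _ j]) (auto simp: lth_one_after_def)
qed

section \<open>Shifting the origin of a stationary process\<close>

abbreviation path_space :: "(int \<Rightarrow> real) measure" where
  "path_space \<equiv> Pi\<^sub>M UNIV (\<lambda>_. borel)"

lemma measurable_shifted_path:
  assumes "\<And>t. X t \<in> borel_measurable N"
  shows "(\<lambda>\<omega> t. X (t + s) \<omega>) \<in> N \<rightarrow>\<^sub>M path_space"
  by (rule measurable_PiM_single'[where f="\<lambda>t \<omega>. X (t + s) \<omega>", simplified]) (use assms in auto)

lemma sets_shifted_path_pred:
  assumes "\<And>t. X t \<in> borel_measurable N" and "Measurable.pred path_space P"
  shows "{\<omega> \<in> space N. P (\<lambda>t. X (t + s) \<omega>)} \<in> sets N"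
proof -
  have "Measurable.pred N (\<lambda>\<omega>. P (\<lambda>t. X (t + s) \<omega>))"
    using measurable_compose[OF measurable_shifted_path[OF assms(1)] assms(2)] by (simp add: o_def)
  then show ?thesis by measurable
qed

lemmas sets_path_pred = sets_shifted_path_pred[where s=0, unfolded add_0_right]

lemma stationary_process_measure_shift:
  assumes st: "stationary_process N X" and X: "\<And>t. X t \<in> borel_measurable N"
    and P: "Measurable.pred path_space P"
  shows "measure N {\<omega> \<in> space N. P (\<lambda>t. X (t + s) \<omega>)} = measure N {\<omega> \<in> space N. P (\<lambda>t. X t \<omega>)}"
proof -
  have P_sets: "{x \<in> space path_space. P x} \<in> sets path_space"
    using P by measurable
  have "measure (distr N path_space (\<lambda>\<omega> t. X (t + s) \<omega>)) {x \<in> space path_space. P x}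
      = measure (distr N path_space (\<lambda>\<omega> t. X t \<omega>)) {x \<in> space path_space. P x}"
    using st unfolding stationary_process_def by metis
  then show ?thesis
    using measure_distr[OF measurable_shifted_path[OF X] P_sets]
      measure_distr[OF measurable_shifted_path[OF X, where s=0] P_sets]
    by (simp add: space_PiM vimage_def Int_def conj_commute)
qed

lemma stationary_measure_le_by_shifts:
  assumes N: "prob_space N" and st: "stationary_process N X" and X: "\<And>t. X t \<in> borel_measurable N"
    and J: "finite J"
    and F: "\<And>j. j \<in> J \<Longrightarrow> Measurable.pred path_space (F j)"
    and E: "Measurable.pred path_space E" and G: "Measurable.pred path_space G"
    and cover: "\<And>\<omega>. \<omega> \<in> space N \<Longrightarrow> E (\<lambda>t. X t \<omega>) \<Longrightarrow> \<exists>j\<in>J. F j (\<lambda>t. X (t + s j) \<omega>)"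
    and disjoint: "\<And>\<omega> i j. \<omega> \<in> space N \<Longrightarrow> i \<in> J \<Longrightarrow> j \<in> J \<Longrightarrow> i \<noteq> j \<Longrightarrow>
        F i (\<lambda>t. X t \<omega>) \<Longrightarrow> F j (\<lambda>t. X t \<omega>) \<Longrightarrow> False"
    and sub: "\<And>\<omega> j. \<omega> \<in> space N \<Longrightarrow> j \<in> J \<Longrightarrow> F j (\<lambda>t. X t \<omega>) \<Longrightarrow> G (\<lambda>t. X t \<omega>)"
  shows "measure N {\<omega> \<in> space N. E (\<lambda>t. X t \<omega>)} \<le> measure N {\<omega> \<in> space N. G (\<lambda>t. X t \<omega>)}"
proof -
  interpret prob_space N by (rule N)
  let ?shifted = "\<lambda>j. {\<omega> \<in> space N. F j (\<lambda>t. X (t + s j) \<omega>)}"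
  let ?piece = "\<lambda>j. {\<omega> \<in> space N. F j (\<lambda>t. X t \<omega>)}"
  have "measure N {\<omega> \<in> space N. E (\<lambda>t. X t \<omega>)} \<le> measure N (\<Union>j\<in>J. ?shifted j)"
    using cover J F by (intro finite_measure_mono) (auto intro!: sets_shifted_path_pred[OF X])
  also have "\<dots> \<le> (\<Sum>j\<in>J. measure N (?shifted j))"
    using J F by (intro measure_subadditive_finite) (auto intro!: sets_shifted_path_pred[OF X])
  also have "\<dots> = (\<Sum>j\<in>J. measure N (?piece j))"
    using F by (intro sum.cong refl stationary_process_measure_shift[OF st X]) auto
  also have "\<dots> = measure N (\<Union>j\<in>J. ?piece j)"
    using J F disjoint
    by (intro measure_finite_Union[symmetric]) (auto intro!: sets_path_pred[OF X] simp: disjoint_family_on_def)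
  also have "\<dots> \<le> measure N {\<omega> \<in> space N. G (\<lambda>t. X t \<omega>)}"
    using sub G by (intro finite_measure_mono) (auto intro!: sets_path_pred[OF X])
  finally show ?thesis .
qed

definition window_counts_ge :: "nat \<Rightarrow> nat \<Rightarrow> nat \<Rightarrow> (int \<Rightarrow> real) \<Rightarrow> bool" where
  "window_counts_ge k l m x \<longleftrightarrow> real k \<le> sum x {1..int m} \<and> real l \<le> sum x {- int m..-1}"

lemma pred_window_counts_ge [measurable]: "Measurable.pred path_space (window_counts_ge k l m)"
  unfolding window_counts_ge_def by measurable

lemma pred_one_at_origin_window_counts_ge [measurable]:
  "Measurable.pred path_space (\<lambda>x. x 0 = 1 \<and> window_counts_ge k l m x)"
  by measurable

lemma window_counts_ge_mono:
  assumes "\<And>t. 0 \<le> x t" "m \<le> m'" "window_counts_ge k l m x"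
  shows "window_counts_ge k l m' x"
proof -
  have "sum x {1..int m} \<le> sum x {1..int m'}" "sum x {- int m..-1} \<le> sum x {- int m'..-1}"
    using assms by (intro sum_mono2; auto)+
  with assms(3) show ?thesis by (auto simp: window_counts_ge_def)
qed

text \<open>Re-centring at the \<open>l\<close>-th one before the origin merges the two windows into one
  of length \<open>2 m\<close> after a one.\<close>
lemma stationary_binary_window_merge_le:
  assumes N: "prob_space N" and st: "stationary_process N X" and X: "\<And>t. X t \<in> borel_measurable N"
    and binary: "\<And>t \<omega>. \<omega> \<in> space N \<Longrightarrow> X t \<omega> \<in> {0, 1}"
  shows "measure N {\<omega> \<in> space N. X 0 \<omega> = 1 \<and> window_counts_ge k l m (\<lambda>t. X t \<omega>)}
    \<le> measure N {\<omega> \<in> space N. X 0 \<omega> = 1 \<and> window_counts_ge (k + l) 0 (2 * m) (\<lambda>t. X t \<omega>)}"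
proof (cases "l = 0")
  case True
  interpret prob_space N by (rule N)
  have "window_counts_ge k 0 (2 * m) (\<lambda>t. X t \<omega>)"
    if "\<omega> \<in> space N" "window_counts_ge k 0 m (\<lambda>t. X t \<omega>)" for \<omega>
  proof (rule window_counts_ge_mono[OF _ _ that(2)])
    show "0 \<le> X t \<omega>" for t
      using binary[OF that(1), of t] by auto
  qed simp
  with True have "{\<omega> \<in> space N. X 0 \<omega> = 1 \<and> window_counts_ge k l m (\<lambda>t. X t \<omega>)}
    \<subseteq> {\<omega> \<in> space N. X 0 \<omega> = 1 \<and> window_counts_ge (k + l) 0 (2 * m) (\<lambda>t. X t \<omega>)}"
    by auto
  then show ?thesis
    by (rule finite_measure_mono) (rule sets_path_pred[OF X pred_one_at_origin_window_counts_ge])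
next
  case False
  define F where "F j y \<longleftrightarrow> y 0 = 1 \<and> lth_one_after l 0 j y \<and> real k \<le> sum y {j + 1..j + int m}"
    for j y
  show ?thesis
  proof (rule stationary_measure_le_by_shifts[OF N st X, where J="{1..int m}" and F=F and s=uminus
        and E="\<lambda>x. x 0 = 1 \<and> window_counts_ge k l m x"
        and G="\<lambda>x. x 0 = 1 \<and> window_counts_ge (k + l) 0 (2 * m) x"])
    show "Measurable.pred path_space (F j)" for j
      unfolding F_def lth_one_after_def by measurable
    show "Measurable.pred path_space (\<lambda>x. x 0 = 1 \<and> window_counts_ge k l m x)"
      "Measurable.pred path_space (\<lambda>x. x 0 = 1 \<and> window_counts_ge (k + l) 0 (2 * m) x)"
      by (rule pred_one_at_origin_window_counts_ge)+
    fix \<omega> assume "\<omega> \<in> space N"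
    then have x: "\<And>t. X t \<omega> \<in> {0, 1}" by (rule binary)
    then have nonneg: "\<And>t. 0 \<le> X t \<omega>" by (metis insert_iff order.refl singletonD zero_le_one)
    show "\<exists>j\<in>{1..int m}. F j (\<lambda>t. X (t + - j) \<omega>)"
      if "X 0 \<omega> = 1 \<and> window_counts_ge k l m (\<lambda>t. X t \<omega>)"
    proof -
      have "\<exists>j\<in>{1..int m}. X (- j) \<omega> = 1 \<and> lth_one_after l (- j) 0 (\<lambda>t. X t \<omega>)"
        using that False by (intro binary_lth_one_before_exists[OF x]) (auto simp: window_counts_ge_def)
      then obtain j where "j \<in> {1..int m}" "X (- j) \<omega> = 1" "lth_one_after l (- j) 0 (\<lambda>t. X t \<omega>)"
        by blast
      with that show ?thesis
        using lth_one_after_shift[of l 0 j "\<lambda>t. X t \<omega>" "- j"]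
          sum_int_interval_shift[of "\<lambda>t. X t \<omega>" "- j" "j + 1" "j + int m"]
        by (intro bexI[of _ j]) (auto simp: F_def window_counts_ge_def)
    qed
    show False if "i \<in> {1..int m}" "j \<in> {1..int m}" "i \<noteq> j"
      "F i (\<lambda>t. X t \<omega>)" "F j (\<lambda>t. X t \<omega>)" for i j
      using that lth_one_after_unique[OF nonneg] by (auto simp: F_def)
    show "X 0 \<omega> = 1 \<and> window_counts_ge (k + l) 0 (2 * m) (\<lambda>t. X t \<omega>)"
      if "j \<in> {1..int m}" "F j (\<lambda>t. X t \<omega>)" for j
    proof -
      have "sum (\<lambda>t. X t \<omega>) {1..j + int m} = sum (\<lambda>t. X t \<omega>) {1..j} + sum (\<lambda>t. X t \<omega>) {j + 1..j + int m}"
        using that by (intro sum_int_interval_split) auto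
      moreover have "sum (\<lambda>t. X t \<omega>) {1..j + int m} \<le> sum (\<lambda>t. X t \<omega>) {1..int (2 * m)}"
        using that nonneg by (intro sum_mono2) auto
      ultimately show ?thesis
        using that nonneg by (auto simp: F_def lth_one_after_def window_counts_ge_def sum_nonneg)
    qed
  qed simp
qed

text \<open>Re-centring at the \<open>l\<close>-th one after the origin moves \<open>l\<close> of the ones into the
  window before the origin.\<close>
lemma stationary_binary_window_split_le:
  assumes N: "prob_space N" and st: "stationary_process N X" and X: "\<And>t. X t \<in> borel_measurable N"
    and binary: "\<And>t \<omega>. \<omega> \<in> space N \<Longrightarrow> X t \<omega> \<in> {0, 1}"
  shows "measure N {\<omega> \<in> space N. X 0 \<omega> = 1 \<and> window_counts_ge (k + l) 0 m (\<lambda>t. X t \<omega>)}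
    \<le> measure N {\<omega> \<in> space N. X 0 \<omega> = 1 \<and> window_counts_ge k l m (\<lambda>t. X t \<omega>)}"
proof (cases "l = 0")
  case False
  define F where
    "F j y \<longleftrightarrow> y (- j) = 1 \<and> lth_one_after l (- j) 0 y \<and> real (k + l) \<le> sum y {- j + 1..int m - j}"
    for j y
  show ?thesis
  proof (rule stationary_measure_le_by_shifts[OF N st X, where J="{1..int m}" and F=F and s="\<lambda>j. j"
        and E="\<lambda>x. x 0 = 1 \<and> window_counts_ge (k + l) 0 m x"
        and G="\<lambda>x. x 0 = 1 \<and> window_counts_ge k l m x"])
    show "Measurable.pred path_space (F j)" for j
      unfolding F_def lth_one_after_def by measurable
    show "Measurable.pred path_space (\<lambda>x. x 0 = 1 \<and> window_counts_ge (k + l) 0 m x)"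
      "Measurable.pred path_space (\<lambda>x. x 0 = 1 \<and> window_counts_ge k l m x)"
      by (rule pred_one_at_origin_window_counts_ge)+
    fix \<omega> assume "\<omega> \<in> space N"
    then have x: "\<And>t. X t \<omega> \<in> {0, 1}" by (rule binary)
    then have nonneg: "\<And>t. 0 \<le> X t \<omega>" by (metis insert_iff order.refl singletonD zero_le_one)
    show "\<exists>j\<in>{1..int m}. F j (\<lambda>t. X (t + j) \<omega>)"
      if "X 0 \<omega> = 1 \<and> window_counts_ge (k + l) 0 m (\<lambda>t. X t \<omega>)"
    proof -
      have "\<exists>j\<in>{1..int m}. lth_one_after l 0 j (\<lambda>t. X t \<omega>)"
        using that False by (intro binary_lth_one_after_exists[OF x]) (auto simp: window_counts_ge_def)
      then obtain j where "j \<in> {1..int m}" "lth_one_after l 0 j (\<lambda>t. X t \<omega>)"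
        by blast
      with that show ?thesis
        using lth_one_after_shift[of l "- j" 0 "\<lambda>t. X t \<omega>" j]
          sum_int_interval_shift[of "\<lambda>t. X t \<omega>" j "- j + 1" "int m - j"]
        by (intro bexI[of _ j]) (auto simp: F_def window_counts_ge_def)
    qed
    show False if "i \<in> {1..int m}" "j \<in> {1..int m}" "i \<noteq> j"
      "F i (\<lambda>t. X t \<omega>)" "F j (\<lambda>t. X t \<omega>)" for i j
      using that lth_one_after_unique_start[OF nonneg, where a="- i" and a'="- j"] by (auto simp: F_def)
    show "X 0 \<omega> = 1 \<and> window_counts_ge k l m (\<lambda>t. X t \<omega>)"
      if j: "j \<in> {1..int m}" and "F j (\<lambda>t. X t \<omega>)" for j
    proof -
      let ?x = "\<lambda>t. X t \<omega>"
      have "sum ?x {- j + 1..int m - j} = sum ?x {- j + 1..0} + sum ?x {1..int m - j}"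
        "sum ?x {- j + 1..0} = sum ?x {- j + 1..-1} + ?x 0"
        "sum ?x {- j..-1} = ?x (- j) + sum ?x {- j + 1..-1}"
        using j sum_int_interval_split[of "- j + 1" 0 "int m - j" ?x]
          sum_int_interval_split[of "- j + 1" "-1" 0 ?x] sum_int_interval_split[of "- j" "- j" "-1" ?x]
        by auto
      moreover have "sum ?x {1..int m - j} \<le> sum ?x {1..int m}" "sum ?x {- j..-1} \<le> sum ?x {- int m..-1}"
        using j nonneg by (intro sum_mono2; auto)+
      ultimately show ?thesis
        using that by (auto simp: F_def lth_one_after_def window_counts_ge_def)
    qed
  qed simp
qed simp

section \<open>Growing windows\<close>

lemma of_nat_le_suminf_binary_iff:
  fixes x :: "nat \<Rightarrow> real"
  assumes x: "\<And>t. x t \<in> {0, 1}"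
  shows "of_nat k \<le> (\<Sum>t. ennreal (x t)) \<longleftrightarrow> (\<exists>m. real k \<le> (\<Sum>t<m. x t))"
proof -
  have "(\<Sum>t<m. ennreal (x t)) = ennreal (\<Sum>t<m. x t)" for m
    using x by (intro sum_ennreal) (metis insert_iff order.refl singletonD zero_le_one)
  then have suminf: "(\<Sum>t. ennreal (x t)) = (SUP m. ennreal (\<Sum>t<m. x t))"
    by (simp add: suminf_eq_SUP)
  show ?thesis
  proof
    assume k: "of_nat k \<le> (\<Sum>t. ennreal (x t))"
    show "\<exists>m. real k \<le> (\<Sum>t<m. x t)"
    proof (cases "k = 0")
      case False
      then have "of_nat (k - 1) < (of_nat k :: ennreal)"
        by simp
      from this k have "of_nat (k - 1) < (SUP m. ennreal (\<Sum>t<m. x t))"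
        unfolding suminf by (rule order.strict_trans2)
      then obtain m where "ennreal (real (k - 1)) < ennreal (\<Sum>t<m. x t)"
        by (auto simp: less_SUP_iff ennreal_of_nat_eq_real_of_nat)
      then have "real k - 1 < (\<Sum>t<m. x t)"
        using False by (simp add: ennreal_less_iff of_nat_diff)
      moreover have "(\<Sum>t<m. x t) \<in> \<nat>"
        using x by (rule binary_sum_in_Nats)
      ultimately show ?thesis
        using Nats_less_imp_le_diff_one by (meson not_le)
    qed (intro exI[of _ 0], simp)
  next
    assume "\<exists>m. real k \<le> (\<Sum>t<m. x t)"
    then obtain m where "real k \<le> (\<Sum>t<m. x t)" by blast
    then have "of_nat k \<le> ennreal (\<Sum>t<m. x t)"
      by (simp add: ennreal_of_nat_eq_real_of_nat ennreal_leI)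
    also have "\<dots> \<le> (\<Sum>t. ennreal (x t))"
      unfolding suminf by (rule SUP_upper) simp
    finally show "of_nat k \<le> (\<Sum>t. ennreal (x t))" .
  qed
qed

lemma sum_lessThan_int_shift: "(\<Sum>t<m. f (int t + 1)) = sum f {1..int m}"
proof (induction m)
  case (Suc m)
  have "{1..int (Suc m)} = insert (int m + 1) {1..int m}" by auto
  then show ?case using Suc by (simp add: add.commute)
qed simp

lemma S_minus_eq_S_plus_reflect: "S_minus X \<omega> = S_plus (\<lambda>t. X (- t)) \<omega>"
  by (simp add: S_minus_def S_plus_def)

lemma binary_le_S_plus_iff:
  "(\<And>t. X t \<omega> \<in> {0, 1}) \<Longrightarrow>
    of_nat k \<le> S_plus X \<omega> \<longleftrightarrow> (\<exists>m. real k \<le> sum (\<lambda>t. X t \<omega>) {1..int m})"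
  unfolding S_plus_def
  by (subst of_nat_le_suminf_binary_iff) (simp_all add: sum_lessThan_int_shift[of "\<lambda>t. X t \<omega>"])

lemma binary_le_S_minus_iff:
  "(\<And>t. X t \<omega> \<in> {0, 1}) \<Longrightarrow>
    of_nat k \<le> S_minus X \<omega> \<longleftrightarrow> (\<exists>m. real k \<le> sum (\<lambda>t. X t \<omega>) {- int m..-1})"
  unfolding S_minus_eq_S_plus_reflect
  by (subst binary_le_S_plus_iff) (simp_all add: sum_int_interval_reflect[of "\<lambda>t. X t \<omega>"])

lemma binary_ex_window_counts_ge_iff:
  assumes x: "\<And>t. X t \<omega> \<in> {0, 1}"
  shows "(\<exists>m. window_counts_ge k l m (\<lambda>t. X t \<omega>)) \<longleftrightarrow> of_nat k \<le> S_plus X \<omega> \<and> of_nat l \<le> S_minus X \<omega>"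
proof -
  have S_plus: "of_nat k \<le> S_plus X \<omega> \<longleftrightarrow> (\<exists>m. real k \<le> sum (\<lambda>t. X t \<omega>) {1..int m})"
    using x by (rule binary_le_S_plus_iff)
  have S_minus: "of_nat l \<le> S_minus X \<omega> \<longleftrightarrow> (\<exists>m. real l \<le> sum (\<lambda>t. X t \<omega>) {- int m..-1})"
    using x by (rule binary_le_S_minus_iff)
  have "\<exists>m. window_counts_ge k l m (\<lambda>t. X t \<omega>)"
    if "real k \<le> sum (\<lambda>t. X t \<omega>) {1..int m1}" "real l \<le> sum (\<lambda>t. X t \<omega>) {- int m2..-1}" for m1 m2
  proof -
    have "0 \<le> X t \<omega>" for t
      using x[of t] by auto
    then have "sum (\<lambda>t. X t \<omega>) {1..int m1} \<le> sum (\<lambda>t. X t \<omega>) {1..int (max m1 m2)}"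
      "sum (\<lambda>t. X t \<omega>) {- int m2..-1} \<le> sum (\<lambda>t. X t \<omega>) {- int (max m1 m2)..-1}"
      by (intro sum_mono2; auto)+
    with that show ?thesis
      unfolding window_counts_ge_def by (intro exI[of _ "max m1 m2"]) auto
  qed
  then show ?thesis
    unfolding S_plus S_minus window_counts_ge_def by blast
qed

lemma tendsto_measure_window_counts_ge:
  assumes M: "prob_space M" and I: "\<And>t. I t \<in> borel_measurable M"
    and binary: "AE \<omega> in M. \<forall>t. I t \<omega> \<in> {0, 1}"
  shows "(\<lambda>m. measure M {\<omega> \<in> space M. window_counts_ge k l m (\<lambda>t. I t \<omega>)})
    \<longlonglongrightarrow> measure M {\<omega> \<in> space M. of_nat k \<le> S_plus I \<omega> \<and> of_nat l \<le> S_minus I \<omega>}"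
proof -
  interpret prob_space M by (rule M)
  define B where "B = {\<omega> \<in> space M. \<forall>t. I t \<omega> \<in> {0, 1}}"
  let ?window = "\<lambda>m. {\<omega> \<in> space M. window_counts_ge k l m (\<lambda>t. I t \<omega>)}"
  let ?S = "{\<omega> \<in> space M. of_nat k \<le> S_plus I \<omega> \<and> of_nat l \<le> S_minus I \<omega>}"
  have B_sets: "B \<in> sets M"
    unfolding B_def using I by measurable
  have window_sets: "?window m \<in> sets M" for m
    by (rule sets_path_pred[OF I pred_window_counts_ge])
  have S_sets: "?S \<in> sets M"
    unfolding S_plus_def S_minus_def using I by measurable
  have inc: "incseq (\<lambda>m. B \<inter> ?window m)"
  proof (rule incseq_SucI)
    show "B \<inter> ?window m \<subseteq> B \<inter> ?window (Suc m)" for m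
    proof safe
      fix \<omega> assume "\<omega> \<in> B" and window: "window_counts_ge k l m (\<lambda>t. I t \<omega>)"
      then have "0 \<le> I t \<omega>" for t
        unfolding B_def by (metis (mono_tags) insertE mem_Collect_eq order.refl singletonD zero_le_one)
      then show "window_counts_ge k l (Suc m) (\<lambda>t. I t \<omega>)"
        by (rule window_counts_ge_mono[OF _ _ window]) simp
    qed
  qed
  have "(\<Union>m. B \<inter> ?window m) = B \<inter> ?S"
    using binary_ex_window_counts_ge_iff[where X=I] by (auto simp: B_def)
  moreover have "(\<lambda>m. measure M (B \<inter> ?window m)) \<longlonglongrightarrow> measure M (\<Union>m. B \<inter> ?window m)"
    using inc B_sets window_sets by (intro finite_Lim_measure_incseq) auto
  moreover have "measure M (B \<inter> A) = measure M A" if "A \<in> sets M" for A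
    using binary that B_sets by (intro measure_eq_AE) (auto simp: B_def)
  ultimately show ?thesis
    using window_sets S_sets by simp
qed

section \<open>Passing to the limit of the conditional windows\<close>

lemma sum_fdd_vec: "A \<subseteq> {- int u..int v} \<Longrightarrow> sum (fdd_vec X u v \<omega>) A = sum (\<lambda>t. X t \<omega>) A"
  by (intro sum.cong) (auto simp: fdd_vec_def)

lemma cond_fdd_conv_tendsto:
  assumes "cond_fdd_conv Mn In M I" and "continuous_on UNIV f" "bounded (range f)"
    and f: "\<And>n \<omega>. \<omega> \<in> space (Mn n) \<Longrightarrow> In n 0 \<omega> = 1 \<Longrightarrow> f (fdd_vec (In n) u v \<omega>) = of_bool (P n \<omega>)"
  shows "(\<lambda>n. measure (Mn n) {\<omega> \<in> space (Mn n). In n 0 \<omega> = 1 \<and> P n \<omega>}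
      / measure (Mn n) {\<omega> \<in> space (Mn n). In n 0 \<omega> = 1})
    \<longlonglongrightarrow> (\<integral>\<omega>. f (fdd_vec I u v \<omega>) \<partial>M)"
proof -
  have integral_eq: "(\<integral>\<omega>. indicator {\<omega> \<in> space (Mn n). In n 0 \<omega> = 1} \<omega> * f (fdd_vec (In n) u v \<omega>) \<partial>Mn n)
    = measure (Mn n) {\<omega> \<in> space (Mn n). In n 0 \<omega> = 1 \<and> P n \<omega>}" for n
  proof -
    have "(\<integral>\<omega>. indicator {\<omega> \<in> space (Mn n). In n 0 \<omega> = 1} \<omega> * f (fdd_vec (In n) u v \<omega>) \<partial>Mn n)
      = (\<integral>\<omega>. indicator {\<omega> \<in> space (Mn n). In n 0 \<omega> = 1 \<and> P n \<omega>} \<omega> \<partial>Mn n)"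
      using f by (intro Bochner_Integration.integral_cong) (auto simp: indicator_def)
    then show ?thesis
      by (simp add: Int_absorb2 subset_eq)
  qed
  have "(\<lambda>n. (\<integral>\<omega>. indicator {\<omega> \<in> space (Mn n). In n 0 \<omega> = 1} \<omega> * f (fdd_vec (In n) u v \<omega>) \<partial>Mn n)
      / measure (Mn n) {\<omega> \<in> space (Mn n). In n 0 \<omega> = 1})
    \<longlonglongrightarrow> (\<integral>\<omega>. f (fdd_vec I u v \<omega>) \<partial>M)"
    using assms(1-3) unfolding cond_fdd_conv_def by blast
  then show ?thesis
    unfolding integral_eq .
qed

lemma cond_fdd_conv_AE_binary:
  assumes M: "prob_space M" and I: "\<And>t. I t \<in> borel_measurable M"
    and binary: "\<And>n t \<omega>. \<omega> \<in> space (Mn n) \<Longrightarrow> In n t \<omega> \<in> {0, 1}"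
    and cv: "cond_fdd_conv Mn In M I"
  shows "AE \<omega> in M. \<forall>t. I t \<omega> \<in> {0, 1}"
  unfolding AE_all_countable
proof
  fix t
  interpret prob_space M by (rule M)
  define w where "w = nat \<bar>t\<bar>"
  define f where "f x = min 1 \<bar>x t * (1 - x t)\<bar>" for x :: "int \<Rightarrow> real"
  have "- int w \<le> t" "t \<le> int w"
    by (auto simp: w_def)
  then have f_window: "f (fdd_vec X w w \<omega>) = min 1 \<bar>X t \<omega> * (1 - X t \<omega>)\<bar>" for X :: "int \<Rightarrow> 'c \<Rightarrow> real" and \<omega>
    by (simp add: f_def fdd_vec_def)
  have "(\<lambda>n. measure (Mn n) {\<omega> \<in> space (Mn n). In n 0 \<omega> = 1 \<and> False}
      / measure (Mn n) {\<omega> \<in> space (Mn n). In n 0 \<omega> = 1})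
    \<longlonglongrightarrow> (\<integral>\<omega>. f (fdd_vec I w w \<omega>) \<partial>M)"
  proof (rule cond_fdd_conv_tendsto[OF cv])
    show "continuous_on UNIV f"
      unfolding f_def by (intro continuous_intros continuous_on_product_coordinates)
    show "bounded (range f)"
      unfolding f_def bounded_iff by (intro exI[of _ 1]) auto
    show "f (fdd_vec (In n) w w \<omega>) = of_bool False" if "\<omega> \<in> space (Mn n)" for n \<omega>
      using binary[OF that, of t] by (auto simp: f_window)
  qed
  then have "(\<integral>\<omega>. min 1 \<bar>I t \<omega> * (1 - I t \<omega>)\<bar> \<partial>M) = 0"
    by (simp add: f_window LIMSEQ_const_iff)
  moreover have "integrable M (\<lambda>\<omega>. min 1 \<bar>I t \<omega> * (1 - I t \<omega>)\<bar>)"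
    using I by (intro integrable_const_bound[where B=1]) auto
  ultimately have "AE \<omega> in M. min 1 \<bar>I t \<omega> * (1 - I t \<omega>)\<bar> = 0"
    by (subst (asm) integral_nonneg_eq_0_iff_AE) auto
  then show "AE \<omega> in M. I t \<omega> \<in> {0, 1}"
    by eventually_elim (auto simp: min_def split: if_splits)
qed

lemma cond_fdd_conv_window_counts_ge:
  assumes M: "prob_space M" and I: "\<And>t. I t \<in> borel_measurable M"
    and binary_limit: "AE \<omega> in M. \<forall>t. I t \<omega> \<in> {0, 1}"
    and binary: "\<And>n t \<omega>. \<omega> \<in> space (Mn n) \<Longrightarrow> In n t \<omega> \<in> {0, 1}"
    and cv: "cond_fdd_conv Mn In M I"
  shows "(\<lambda>n. measure (Mn n) {\<omega> \<in> space (Mn n). In n 0 \<omega> = 1 \<and> window_counts_ge k l m (\<lambda>t. In n t \<omega>)}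
      / measure (Mn n) {\<omega> \<in> space (Mn n). In n 0 \<omega> = 1})
    \<longlonglongrightarrow> measure M {\<omega> \<in> space M. window_counts_ge k l m (\<lambda>t. I t \<omega>)}"
proof -
  interpret prob_space M by (rule M)
  \<comment> \<open>a continuous cut-off of the indicator of \<open>[k, \<infinity>)\<close>, exact on \<open>\<nat>\<close>\<close>
  define h where "h k s = max 0 (min 1 (s - real k + 1))" for k :: nat and s :: real
  define f where "f x = h k (sum x {1..int m}) * h l (sum x {- int m..-1})" for x :: "int \<Rightarrow> real"
  have h_Nats: "h k s = of_bool (real k \<le> s)" if "s \<in> \<nat>" for k s
    using Nats_less_imp_le_diff_one[OF that, of k] by (auto simp: h_def)
  have f_binary: "f x = of_bool (window_counts_ge k l m x)" if "\<And>t. x t \<in> {0, 1}" for x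
    using binary_sum_in_Nats[of x, OF that] by (simp add: f_def h_Nats window_counts_ge_def)
  have f_window: "f (fdd_vec X m m \<omega>) = f (\<lambda>t. X t \<omega>)" for X :: "int \<Rightarrow> 'c \<Rightarrow> real" and \<omega>
    by (simp add: f_def sum_fdd_vec subset_eq)
  have "(\<lambda>n. measure (Mn n) {\<omega> \<in> space (Mn n). In n 0 \<omega> = 1 \<and> window_counts_ge k l m (\<lambda>t. In n t \<omega>)}
      / measure (Mn n) {\<omega> \<in> space (Mn n). In n 0 \<omega> = 1})
    \<longlonglongrightarrow> (\<integral>\<omega>. f (fdd_vec I m m \<omega>) \<partial>M)"
  proof (rule cond_fdd_conv_tendsto[OF cv])
    show "continuous_on UNIV f"
      unfolding f_def h_def by (intro continuous_intros continuous_on_product_coordinates)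
    have "\<bar>h k s\<bar> \<le> 1" for k s
      by (simp add: h_def)
    then have "\<bar>f x\<bar> \<le> 1" for x
      unfolding f_def abs_mult by (metis abs_ge_zero mult_le_one)
    then show "bounded (range f)"
      unfolding bounded_iff by auto
    show "f (fdd_vec (In n) m m \<omega>) = of_bool (window_counts_ge k l m (\<lambda>t. In n t \<omega>))"
      if "\<omega> \<in> space (Mn n)" for n \<omega>
      using binary[OF that] by (simp add: f_window f_binary)
  qed
  also have "(\<integral>\<omega>. f (fdd_vec I m m \<omega>) \<partial>M) = (\<integral>\<omega>. indicator {\<omega> \<in> space M. window_counts_ge k l m (\<lambda>t. I t \<omega>)} \<omega> \<partial>M)"
  proof (rule integral_cong_AE)
    show "(\<lambda>\<omega>. f (fdd_vec I m m \<omega>)) \<in> borel_measurable M"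
      unfolding f_window unfolding f_def h_def using I by measurable
    show "AE \<omega> in M. f (fdd_vec I m m \<omega>) = indicator {\<omega> \<in> space M. window_counts_ge k l m (\<lambda>t. I t \<omega>)} \<omega>"
      using binary_limit AE_space by eventually_elim (simp add: f_window f_binary indicator_def)
  qed (rule borel_measurable_indicator[OF sets_path_pred[OF I pred_window_counts_ge]])
  also have "\<dots> = measure M {\<omega> \<in> space M. window_counts_ge k l m (\<lambda>t. I t \<omega>)}"
    by (simp add: Int_absorb2 subset_eq)
  finally show ?thesis .
qed

theorem proposition3p1:
  fixes M :: "'a measure" and I :: "int \<Rightarrow> 'a \<Rightarrow> real"
    and Mn :: "nat \<Rightarrow> 'b measure" and In :: "nat \<Rightarrow> int \<Rightarrow> 'b \<Rightarrow> real"
  assumes "prob_space M"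
    and "\<And>t. I t \<in> borel_measurable M"
    and "\<And>n. prob_space (Mn n)"
    and "\<And>n t. In n t \<in> borel_measurable (Mn n)"
    and "\<And>n t \<omega>. \<omega> \<in> space (Mn n) \<Longrightarrow> In n t \<omega> \<in> {0, 1}"
    and "\<And>n. stationary_process (Mn n) (In n)"
    and "\<And>n. measure (Mn n) {\<omega> \<in> space (Mn n). In n 0 \<omega> = 1} > 0"
    and "cond_fdd_conv Mn In M I"
  shows "\<forall>k l :: nat.
     measure M {\<omega> \<in> space M. of_nat k \<le> S_plus I \<omega> \<and> of_nat l \<le> S_minus I \<omega>}
       = measure M {\<omega> \<in> space M. of_nat (k + l) \<le> S_plus I \<omega>}
   \<and> measure M {\<omega> \<in> space M. of_nat (k + l) \<le> S_plus I \<omega>}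
       = measure M {\<omega> \<in> space M. of_nat (k + l) \<le> S_minus I \<omega>}"
proof -
  note M = assms(1) and I = assms(2) and Mn = assms(3) and In = assms(4) and binary = assms(5)
    and stationary = assms(6) and pos = assms(7) and cv = assms(8)
  have binary_limit: "AE \<omega> in M. \<forall>t. I t \<omega> \<in> {0, 1}"
    using M I binary cv by (rule cond_fdd_conv_AE_binary)
  define P where "P k l m = measure M {\<omega> \<in> space M. window_counts_ge k l m (\<lambda>t. I t \<omega>)}" for k l m
  define Q where "Q n k l m = measure (Mn n) {\<omega> \<in> space (Mn n). In n 0 \<omega> = 1 \<and> window_counts_ge k l m (\<lambda>t. In n t \<omega>)}
    / measure (Mn n) {\<omega> \<in> space (Mn n). In n 0 \<omega> = 1}" for n k l m
  define S where "S k l = measure M {\<omega> \<in> space M. of_nat k \<le> S_plus I \<omega> \<and> of_nat l \<le> S_minus I \<omega>}" for k l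
  have Q_P: "(\<lambda>n. Q n k l m) \<longlonglongrightarrow> P k l m" for k l m
    unfolding Q_def P_def using M I binary_limit binary cv by (rule cond_fdd_conv_window_counts_ge)
  have P_S: "(\<lambda>m. P k l m) \<longlonglongrightarrow> S k l" for k l
    unfolding P_def S_def using M I binary_limit by (rule tendsto_measure_window_counts_ge)
  have merge: "P k l m \<le> P (k + l) 0 (2 * m)" for k l m
    using Q_P Q_P unfolding Q_def
    by (rule LIMSEQ_le) (use stationary_binary_window_merge_le[OF Mn stationary In binary] pos
      in \<open>auto intro!: divide_right_mono\<close>)
  have split: "P (k + l) 0 m \<le> P k l m" for k l m
    using Q_P Q_P unfolding Q_def
    by (rule LIMSEQ_le) (use stationary_binary_window_split_le[OF Mn stationary In binary] pos
      in \<open>auto intro!: divide_right_mono\<close>)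
  have S_eq: "S k l = S (k + l) 0" for k l
    using P_S P_S by (rule LIMSEQ_unique_interleaved[where r="\<lambda>m. 2 * m"])
      (auto intro: merge split simp: strict_mono_def)
  show ?thesis
    using S_eq[of 0] S_eq by (simp add: S_def del: of_nat_add)
qed

end
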